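(* Let $\Omega\subset K$ be a simply connected domain, where $K=\mathbb{C}\setminus(-\infty,0]$. The following are equivalent: (a) there is a conformal map $f\colon\mathbb{H}\to\Omega$ with $\angle\lim_{z\to\infty}f(z)=\infty$ such that $\sqrt f$ is conformal at infinity, where $\sqrt{\cdot}$ is the branch mapping $K$ conformally onto the right half-plane; (b) there is a conformal map $g\colon K\to\Omega$ with $g(\infty)=\infty$ such that $\angle\lim_{w\to\infty}g(w)/w\in\mathbb{C}\setminus\{0\}$ (angular limit in $K$).
   Context: $\mathbb{H}$ is the upper half-plane. For a holomorphic $F\colon\mathbb{H}\to\mathbb{C}$, $\angle\lim_{z\to\infty}F(z)=\ell$ means $F(z)\to\ell$ as $z\to\infty$ within each sector $\{|\arg z-\pi/2|<\theta\}$, $\theta\in(0,\pi/2)$. A holomorphic $F\colon\mathbb{H}\to\mathbb{C}$ with $\angle\lim_{z\to\infty}F(z)=\infty$ is conformal at infinity if $\angle\lim_{z\to\infty}F(z)/z\in\mathbb{C}\setminus\{0\}$. For maps on $K$, angular limits at $\infty$ are taken as $w\to\infty$ within each sector $\{|\arg w|<\theta\}$, $\theta\in(0,\pi)$. *)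

theory Defs
  imports "HOL-Complex_Analysis.Complex_Analysis"
begin

definition upper_half_plane :: "complex set" where
  "upper_half_plane = {z. Im z > 0}"

definition slit_plane :: "complex set" where
  "slit_plane = {w. \<not> (Im w = 0 \<and> Re w \<le> 0)}"

definition H_sector :: "real \<Rightarrow> complex set" where
  "H_sector \<theta> = {z. z \<noteq> 0 \<and> \<bar>Arg z - pi/2\<bar> < \<theta>}"

definition K_sector :: "real \<Rightarrow> complex set" where
  "K_sector \<theta> = {w. w \<noteq> 0 \<and> \<bar>Arg w\<bar> < \<theta>}"

text \<open>Angular convergence at infinity in H towards the filter G
  (G = nhds l for a finite limit, G = at_infinity for the limit infinity).\<close>
definition ang_tendsto_H :: "(complex \<Rightarrow> complex) \<Rightarrow> complex filter \<Rightarrow> bool" where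
  "ang_tendsto_H F G \<longleftrightarrow>
     (\<forall>\<theta>. 0 < \<theta> \<and> \<theta> < pi/2 \<longrightarrow> filterlim F G (inf at_infinity (principal (H_sector \<theta>))))"

definition ang_tendsto_K :: "(complex \<Rightarrow> complex) \<Rightarrow> complex filter \<Rightarrow> bool" where
  "ang_tendsto_K F G \<longleftrightarrow>
     (\<forall>\<theta>. 0 < \<theta> \<and> \<theta> < pi \<longrightarrow> filterlim F G (inf at_infinity (principal (K_sector \<theta>))))"

definition conformal_at_infinity_H :: "(complex \<Rightarrow> complex) \<Rightarrow> bool" where
  "conformal_at_infinity_H F \<longleftrightarrow>
     ang_tendsto_H F at_infinity \<and> (\<exists>c. c \<noteq> 0 \<and> ang_tendsto_H (\<lambda>z. F z / z) (nhds c))"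

definition conformal_map_onto :: "(complex \<Rightarrow> complex) \<Rightarrow> complex set \<Rightarrow> complex set \<Rightarrow> bool" where
  "conformal_map_onto f A B \<longleftrightarrow> f holomorphic_on A \<and> inj_on f A \<and> f ` A = B"

end

theory Submission
  imports Defs
begin

text \<open>The map \<open>w \<mapsto> \<i> * csqrt w\<close> is a conformal bijection from the slit plane K onto
  the upper half-plane, with inverse \<open>z \<mapsto> - z\<^sup>2\<close>, and it maps the sector of opening
  \<open>\<theta>\<close> in K onto the sector of opening \<open>\<theta>/2\<close> in H. Composing with it therefore
  translates (a) into (b) and back: \<open>g w / w = - (csqrt (f z) / z)\<^sup>2\<close> for \<open>z = \<i> * csqrt w\<close>.
  The only subtle point is the way back, where \<open>csqrt (f z) / z\<close> is only known to have
  a square tending to \<open>-c\<close>. It is continuous on H, hence on the connected tails of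
  each sector it stays near one of the two square roots of \<open>-c\<close>, and since the sectors
  are nested this root does not depend on the sector.\<close>

lemma slit_plane_eq: "slit_plane = - \<real>\<^sub>\<le>\<^sub>0"
  by (auto simp: slit_plane_def complex_nonpos_Reals_iff)

lemma H_sector_subset_upper_half_plane:
  assumes "\<theta> \<le> pi/2"
  shows "H_sector \<theta> \<subseteq> upper_half_plane"
  using assms by (auto simp: H_sector_def upper_half_plane_def simp flip: Arg_lt_pi)

lemma H_sector_mono: "\<theta>1 \<le> \<theta>2 \<Longrightarrow> H_sector \<theta>1 \<subseteq> H_sector \<theta>2"
  by (auto simp: H_sector_def)

lemma sqrt_in_H_sector:
  assumes "\<theta> < pi" "w \<in> K_sector \<theta>"
  shows "\<i> * csqrt w \<in> H_sector (\<theta>/2)"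
proof -
  have w: "w \<noteq> 0" "\<bar>Arg w\<bar> < \<theta>"
    using assms by (auto simp: K_sector_def)
  have "Arg (\<i> * csqrt w) = pi/2 + Arg w / 2"
    using w assms by (subst Arg_times) auto
  then show ?thesis
    using w by (auto simp: H_sector_def)
qed

lemma neg_square_in_K_sector:
  assumes "\<theta> < pi/2" "z \<in> H_sector \<theta>"
  shows "- z\<^sup>2 \<in> K_sector (2*\<theta>)"
proof -
  have z: "z \<noteq> 0" "\<bar>Arg z - pi/2\<bar> < \<theta>"
    using assms by (auto simp: H_sector_def)
  have rot: "Arg (-\<i> * z) = Arg z - pi/2"
    using z assms by (subst Arg_times) auto
  have "- z\<^sup>2 = (-\<i> * z) * (-\<i> * z)"
    by (simp add: power2_eq_square algebra_simps)
  moreover have "Arg ((-\<i> * z) * (-\<i> * z)) = 2 * (Arg z - pi/2)"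
    using Arg_times[of "-\<i> * z" "-\<i> * z"] rot z assms by auto
  ultimately show ?thesis
    using z by (auto simp: K_sector_def)
qed

lemma filterlim_at_infinity_inf_principal:
  assumes "filterlim p at_infinity at_infinity" "\<And>x. x \<in> A \<Longrightarrow> p x \<in> B"
  shows "filterlim p (inf at_infinity (principal B)) (inf at_infinity (principal A))"
  unfolding filterlim_inf filterlim_principal
proof
  show "filterlim p at_infinity (inf at_infinity (principal A))"
    using filterlim_mono[OF assms(1) order_refl inf_le1] .
  show "\<forall>\<^sub>F x in inf at_infinity (principal A). p x \<in> B"
    unfolding eventually_inf_principal using assms(2) by (auto intro: always_eventually)
qed

lemma filterlim_csqrt_at_infinity: "filterlim csqrt at_infinity at_infinity"
proof -
  have "filterlim (\<lambda>w::complex. sqrt (norm w)) at_top at_infinity"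
    by (rule filterlim_compose[OF sqrt_at_top filterlim_at_infinity_imp_norm_at_top])
       (rule filterlim_ident)
  then show ?thesis
    by (simp add: filterlim_at_infinity_conv_norm_at_top)
qed

lemma ang_tendsto_K_compose_sqrt:
  assumes "ang_tendsto_H F G"
  shows "ang_tendsto_K (\<lambda>w. F (\<i> * csqrt w)) G"
  unfolding ang_tendsto_K_def
proof (intro allI impI)
  fix \<theta> :: real assume \<theta>: "0 < \<theta> \<and> \<theta> < pi"
  have "filterlim (\<lambda>w. \<i> * csqrt w) at_infinity at_infinity"
    using filterlim_csqrt_at_infinity by (simp add: filterlim_at_infinity_conv_norm_at_top norm_mult)
  then have "filterlim (\<lambda>w. \<i> * csqrt w) (inf at_infinity (principal (H_sector (\<theta>/2))))
      (inf at_infinity (principal (K_sector \<theta>)))"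
    using sqrt_in_H_sector \<theta> by (intro filterlim_at_infinity_inf_principal) auto
  moreover have "filterlim F G (inf at_infinity (principal (H_sector (\<theta>/2))))"
    using assms \<theta> unfolding ang_tendsto_H_def by auto
  ultimately show "filterlim (\<lambda>w. F (\<i> * csqrt w)) G (inf at_infinity (principal (K_sector \<theta>)))"
    by (rule filterlim_compose[rotated])
qed

lemma ang_tendsto_H_compose_neg_square:
  assumes "ang_tendsto_K F G"
  shows "ang_tendsto_H (\<lambda>z. F (- z\<^sup>2)) G"
  unfolding ang_tendsto_H_def
proof (intro allI impI)
  fix \<theta> :: real assume \<theta>: "0 < \<theta> \<and> \<theta> < pi/2"
  have "filterlim (\<lambda>z::complex. - z\<^sup>2) at_infinity at_infinity"
    by (simp add: filterlim_at_infinity_conv_norm_at_top norm_power)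
       (intro filterlim_pow_at_top filterlim_at_infinity_imp_norm_at_top filterlim_ident, simp)
  then have "filterlim (\<lambda>z. - z\<^sup>2) (inf at_infinity (principal (K_sector (2*\<theta>))))
      (inf at_infinity (principal (H_sector \<theta>)))"
    using neg_square_in_K_sector \<theta> by (intro filterlim_at_infinity_inf_principal) auto
  moreover have "filterlim F G (inf at_infinity (principal (K_sector (2*\<theta>))))"
    using assms \<theta> unfolding ang_tendsto_K_def by auto
  ultimately show "filterlim (\<lambda>z. F (- z\<^sup>2)) G (inf at_infinity (principal (H_sector \<theta>)))"
    by (rule filterlim_compose[rotated])
qed

lemma ang_tendsto_H_isCont_compose:
  assumes "ang_tendsto_H F (nhds c)" "isCont h c"
  shows "ang_tendsto_H (\<lambda>z. h (F z)) (nhds (h c))"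
  using assms isCont_tendsto_compose unfolding ang_tendsto_H_def by blast

lemma ang_tendsto_K_isCont_compose:
  assumes "ang_tendsto_K F (nhds c)" "isCont h c"
  shows "ang_tendsto_K (\<lambda>w. h (F w)) (nhds (h c))"
  using assms isCont_tendsto_compose unfolding ang_tendsto_K_def by blast

lemma conformal_map_onto_compose:
  assumes "conformal_map_onto p A B" "conformal_map_onto f B C"
  shows "conformal_map_onto (f \<circ> p) A C"
  using assms unfolding conformal_map_onto_def
  by (auto intro: holomorphic_on_compose_gen comp_inj_on simp: image_comp [symmetric])

lemma Re_csqrt_pos: "w \<in> slit_plane \<Longrightarrow> 0 < Re (csqrt w)"
  using Arg_bounded[of w] Arg_Re_pos[of "csqrt w"] Arg_eq_pi[of w]
  by (auto simp: slit_plane_def)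

lemma neg_square_in_slit_plane:
  assumes "z \<in> upper_half_plane"
  shows "- z\<^sup>2 \<in> slit_plane"
proof -
  have y: "Im z > 0"
    using assms by (simp add: upper_half_plane_def)
  have "Re z = 0" if "Im (- z\<^sup>2) = 0"
    using that y by (simp add: power2_eq_square)
  moreover have "Re (- z\<^sup>2) > 0" if "Re z = 0"
    using that y by (simp add: power2_eq_square)
  ultimately show ?thesis
    by (auto simp: slit_plane_def)
qed

lemma sqrt_neg_square: "z \<in> upper_half_plane \<Longrightarrow> \<i> * csqrt (- z\<^sup>2) = z"
  using csqrt_unique[of "-\<i> * z" "- z\<^sup>2"]
  by (auto simp: upper_half_plane_def power_mult_distrib)

lemma conformal_map_onto_sqrt: "conformal_map_onto (\<lambda>w. \<i> * csqrt w) slit_plane upper_half_plane"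
  unfolding conformal_map_onto_def
proof (intro conjI)
  show "(\<lambda>w. \<i> * csqrt w) holomorphic_on slit_plane"
    by (intro holomorphic_intros) (simp add: slit_plane_eq)
  show "inj_on (\<lambda>w. \<i> * csqrt w) slit_plane"
    by (rule inj_on_inverseI[where g = "\<lambda>z. - z\<^sup>2"]) (simp add: power_mult_distrib)
  show "(\<lambda>w. \<i> * csqrt w) ` slit_plane = upper_half_plane"
    using Re_csqrt_pos sqrt_neg_square neg_square_in_slit_plane
    by (force simp: upper_half_plane_def)
qed

lemma conformal_map_onto_neg_square: "conformal_map_onto (\<lambda>z. - z\<^sup>2) upper_half_plane slit_plane"
  unfolding conformal_map_onto_def
proof (intro conjI)
  show "(\<lambda>z. - z\<^sup>2) holomorphic_on upper_half_plane"
    by (intro holomorphic_intros)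
  show "inj_on (\<lambda>z. - z\<^sup>2) upper_half_plane"
    by (rule inj_on_inverseI[where g = "\<lambda>w. \<i> * csqrt w"]) (rule sqrt_neg_square)
  have "w \<in> (\<lambda>z. - z\<^sup>2) ` upper_half_plane" if "w \<in> slit_plane" for w
    using Re_csqrt_pos[OF that]
    by (intro image_eqI[of _ _ "\<i> * csqrt w"]) (auto simp: upper_half_plane_def power_mult_distrib)
  then show "(\<lambda>z. - z\<^sup>2) ` upper_half_plane = slit_plane"
    using neg_square_in_slit_plane by auto
qed

lemma connected_H_sector_tail:
  assumes "0 \<le> R" "\<theta> \<le> pi/2"
  shows "connected {z \<in> H_sector \<theta>. R < norm z}"
proof -
  let ?polar = "\<lambda>(r, a). rcis r a"
  let ?D = "{R<..} \<times> {pi/2 - \<theta><..<pi/2 + \<theta>}"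
  have eq: "{z \<in> H_sector \<theta>. R < norm z} = ?polar ` ?D"
  proof (intro set_eqI iffI)
    fix z assume z: "z \<in> {z \<in> H_sector \<theta>. R < norm z}"
    then have "(norm z, Arg z) \<in> ?D"
      by (auto simp: H_sector_def)
    moreover have "z = ?polar (norm z, Arg z)"
      by (simp add: rcis_cmod_Arg)
    ultimately show "z \<in> ?polar ` ?D"
      by (rule rev_image_eqI)
  next
    fix z assume "z \<in> ?polar ` ?D"
    then obtain r a where ra: "R < r" "pi/2 - \<theta> < a" "a < pi/2 + \<theta>" "z = rcis r a"
      by auto
    have "Arg z = a"
      using ra assms by (intro Arg_unique'[of r]) auto
    moreover have "norm z = r" "z \<noteq> 0"
      using ra assms by auto
    ultimately show "z \<in> {z \<in> H_sector \<theta>. R < norm z}"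
      using ra by (auto simp: H_sector_def)
  qed
  have "continuous_on ?D ?polar"
    by (auto simp: rcis_def case_prod_unfold intro!: continuous_intros)
  moreover have "connected ?D"
    by (intro convex_connected convex_Times) auto
  ultimately show ?thesis
    unfolding eq by (rule connected_continuous_image)
qed

lemma Re_nonzero_if_square_near_one:
  assumes "norm (u\<^sup>2 - 1) < 1"
  shows "Re u \<noteq> 0"
proof
  assume "Re u = 0"
  then have "Re (u\<^sup>2 - 1) = -1 - Im u * Im u"
    by (simp add: power2_eq_square)
  moreover have "\<bar>Re (u\<^sup>2 - 1)\<bar> \<le> norm (u\<^sup>2 - 1)"
    by (rule abs_Re_le_cmod)
  ultimately show False
    using assms zero_le_square[of "Im u"] by linarith
qed

lemma connected_Re_sign:
  assumes "connected A" "continuous_on A k" "\<And>z. z \<in> A \<Longrightarrow> Re (k z) \<noteq> 0"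
  shows "(\<forall>z\<in>A. 0 < Re (k z)) \<or> (\<forall>z\<in>A. Re (k z) < 0)"
proof (rule ccontr)
  assume "\<not> ?thesis"
  then obtain z1 z2 where z: "z1 \<in> A" "z2 \<in> A" "Re (k z1) \<le> 0" "0 \<le> Re (k z2)"
    by (auto simp: not_less)
  have "connected ((\<lambda>z. Re (k z)) ` A)"
    using assms(1,2) by (intro connected_continuous_image continuous_intros)
  then have "0 \<in> (\<lambda>z. Re (k z)) ` A"
    using z unfolding connected_iff_interval by blast
  then show False
    using assms(3) by force
qed

lemma H_sector_tendsto_sign:
  fixes k :: "complex \<Rightarrow> complex"
  assumes "\<theta> \<le> pi/2" "continuous_on upper_half_plane k"
    and "((\<lambda>z. (k z)\<^sup>2) \<longlongrightarrow> 1) (inf at_infinity (principal (H_sector \<theta>)))"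
  shows "(k \<longlongrightarrow> 1) (inf at_infinity (principal (H_sector \<theta>))) \<or>
         (k \<longlongrightarrow> -1) (inf at_infinity (principal (H_sector \<theta>)))"
proof -
  let ?F = "inf at_infinity (principal (H_sector \<theta>))"
  obtain b where b: "\<And>z. b \<le> norm z \<Longrightarrow> z \<in> H_sector \<theta> \<Longrightarrow> norm ((k z)\<^sup>2 - 1) < 1"
    using tendstoD[OF assms(3), of 1]
    unfolding eventually_inf_principal eventually_at_infinity dist_norm by auto
  define A where "A = {z \<in> H_sector \<theta>. max b 0 < norm z}"
  have A_eventually: "eventually (\<lambda>z. z \<in> A) ?F"
    unfolding eventually_inf_principal eventually_at_infinity A_def
    by (rule exI[of _ "max b 0 + 1"]) auto
  have "connected A"
    unfolding A_def using assms(1) by (intro connected_H_sector_tail) auto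
  moreover have "continuous_on A k"
    using H_sector_subset_upper_half_plane[OF assms(1)]
    by (intro continuous_on_subset[OF assms(2)]) (auto simp: A_def)
  moreover have "Re (k z) \<noteq> 0" if "z \<in> A" for z
    using that b by (intro Re_nonzero_if_square_near_one) (auto simp: A_def)
  ultimately consider "\<forall>z\<in>A. 0 < Re (k z)" | "\<forall>z\<in>A. Re (k z) < 0"
    using connected_Re_sign by blast
  moreover have csqrt_lim: "((\<lambda>z. csqrt ((k z)\<^sup>2)) \<longlongrightarrow> 1) ?F"
    using isCont_tendsto_compose[OF continuous_at_csqrt assms(3)]
    by (simp add: complex_nonpos_Reals_iff)
  ultimately show ?thesis
  proof cases
    case 1
    have "eventually (\<lambda>z. csqrt ((k z)\<^sup>2) = k z) ?F"
      using A_eventually by (rule eventually_mono) (use 1 in \<open>auto intro: csqrt_unique\<close>)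
    then show ?thesis
      using Lim_transform_eventually[OF csqrt_lim] by blast
  next
    case 2
    have "eventually (\<lambda>z. - csqrt ((k z)\<^sup>2) = k z) ?F"
      using A_eventually by (rule eventually_mono)
        (use 2 in \<open>auto simp: minus_equation_iff intro!: csqrt_unique [symmetric]\<close>)
    then show ?thesis
      using Lim_transform_eventually[OF tendsto_minus[OF csqrt_lim]] by auto
  qed
qed

lemma H_sector_filter_nontrivial:
  assumes "0 < \<theta>"
  shows "inf at_infinity (principal (H_sector \<theta>)) \<noteq> bot"
proof
  assume "inf at_infinity (principal (H_sector \<theta>)) = bot"
  then have "eventually (\<lambda>_. False) (inf at_infinity (principal (H_sector \<theta>)))"
    by simp
  then obtain b where b: "\<And>z. b \<le> norm z \<Longrightarrow> z \<notin> H_sector \<theta>"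
    unfolding eventually_inf_principal eventually_at_infinity by auto
  define r where "r = \<bar>b\<bar> + 1"
  have "r > 0" "b \<le> r"
    unfolding r_def by auto
  then have "of_real r * \<i> \<in> H_sector \<theta>" "b \<le> norm (of_real r * \<i>)"
    using assms by (auto simp: H_sector_def norm_mult)
  then show False
    using b by blast
qed

lemma H_sector_filter_mono:
  "\<theta>1 \<le> \<theta>2 \<Longrightarrow> inf at_infinity (principal (H_sector \<theta>1)) \<le> inf at_infinity (principal (H_sector \<theta>2))"
  using H_sector_mono by (intro inf_mono order_refl) auto

lemma ang_tendsto_H_common_limit:
  fixes k :: "complex \<Rightarrow> complex"
  assumes "\<And>\<theta>. 0 < \<theta> \<Longrightarrow> \<theta> < pi/2 \<Longrightarrow> \<exists>l. (k \<longlongrightarrow> l) (inf at_infinity (principal (H_sector \<theta>)))"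
  shows "\<exists>l. ang_tendsto_H k (nhds l)"
proof -
  obtain l where l: "(k \<longlongrightarrow> l) (inf at_infinity (principal (H_sector (pi/4))))"
    using assms[of "pi/4"] by auto
  have "(k \<longlongrightarrow> l) (inf at_infinity (principal (H_sector \<theta>)))" if \<theta>: "0 < \<theta>" "\<theta> < pi/2" for \<theta>
  proof -
    obtain l' where l': "(k \<longlongrightarrow> l') (inf at_infinity (principal (H_sector \<theta>)))"
      using assms \<theta> by blast
    let ?F = "inf at_infinity (principal (H_sector (min \<theta> (pi/4))))"
    have "(k \<longlongrightarrow> l') ?F" "(k \<longlongrightarrow> l) ?F"
      using l' l by (auto elim!: tendsto_mono[rotated] intro: H_sector_filter_mono)
    then have "l' = l"
      using H_sector_filter_nontrivial \<theta> by (intro tendsto_unique) auto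
    then show ?thesis
      using l' by simp
  qed
  then show ?thesis
    unfolding ang_tendsto_H_def by blast
qed

lemma ang_tendsto_H_root_of_one:
  fixes k :: "complex \<Rightarrow> complex"
  assumes "continuous_on upper_half_plane k" "ang_tendsto_H (\<lambda>z. (k z)\<^sup>2) (nhds 1)"
  shows "\<exists>\<sigma>. \<sigma>\<^sup>2 = 1 \<and> ang_tendsto_H k (nhds \<sigma>)"
proof -
  have "\<exists>l. (k \<longlongrightarrow> l) (inf at_infinity (principal (H_sector \<theta>)))"
    if "0 < \<theta>" "\<theta> < pi/2" for \<theta>
    using H_sector_tendsto_sign[OF _ assms(1), of \<theta>] assms(2) that
    unfolding ang_tendsto_H_def by auto
  then obtain \<sigma> where \<sigma>: "ang_tendsto_H k (nhds \<sigma>)"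
    using ang_tendsto_H_common_limit by blast
  let ?F = "inf at_infinity (principal (H_sector (pi/4)))"
  have "((\<lambda>z. (k z)\<^sup>2) \<longlongrightarrow> \<sigma>\<^sup>2) ?F" "((\<lambda>z. (k z)\<^sup>2) \<longlongrightarrow> 1) ?F"
    using \<sigma> assms(2) unfolding ang_tendsto_H_def by (auto intro: tendsto_intros)
  then have "\<sigma>\<^sup>2 = 1"
    using H_sector_filter_nontrivial by (intro tendsto_unique) auto
  with \<sigma> show ?thesis
    by blast
qed

lemma slit_plane_map_if_half_plane_map:
  assumes "conformal_map_onto f upper_half_plane \<Omega>" "ang_tendsto_H f at_infinity"
    and "conformal_at_infinity_H (\<lambda>z. csqrt (f z))"
  shows "\<exists>g. conformal_map_onto g slit_plane \<Omega> \<and> ang_tendsto_K g at_infinity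
             \<and> (\<exists>c. c \<noteq> 0 \<and> ang_tendsto_K (\<lambda>w. g w / w) (nhds c))"
proof -
  obtain c where c: "c \<noteq> 0" "ang_tendsto_H (\<lambda>z. csqrt (f z) / z) (nhds c)"
    using assms(3) unfolding conformal_at_infinity_H_def by blast
  define g where "g = f \<circ> (\<lambda>w. \<i> * csqrt w)"
  have "conformal_map_onto g slit_plane \<Omega>"
    unfolding g_def using conformal_map_onto_sqrt assms(1) by (rule conformal_map_onto_compose)
  moreover have "ang_tendsto_K g at_infinity"
    unfolding g_def o_def using assms(2) by (rule ang_tendsto_K_compose_sqrt)
  moreover have "ang_tendsto_K (\<lambda>w. g w / w) (nhds (- c\<^sup>2))"
  proof -
    have "ang_tendsto_K (\<lambda>w. - (csqrt (f (\<i> * csqrt w)) / (\<i> * csqrt w))\<^sup>2) (nhds (- c\<^sup>2))"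
      using ang_tendsto_K_compose_sqrt[OF c(2)] by (rule ang_tendsto_K_isCont_compose) simp
    moreover have "(\<lambda>w. - (csqrt (f (\<i> * csqrt w)) / (\<i> * csqrt w))\<^sup>2) = (\<lambda>w. g w / w)"
      by (auto simp: g_def power_divide power_mult_distrib)
    ultimately show ?thesis
      by simp
  qed
  moreover have "- c\<^sup>2 \<noteq> 0"
    using c(1) by simp
  ultimately show ?thesis
    by blast
qed

lemma half_plane_map_if_slit_plane_map:
  assumes "conformal_map_onto g slit_plane \<Omega>" "ang_tendsto_K g at_infinity"
    and "c \<noteq> 0" "ang_tendsto_K (\<lambda>w. g w / w) (nhds c)" and "\<Omega> \<subseteq> slit_plane"
  shows "\<exists>f. conformal_map_onto f upper_half_plane \<Omega> \<and> ang_tendsto_H f at_infinity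
             \<and> conformal_at_infinity_H (\<lambda>z. csqrt (f z))"
proof -
  define f where "f = g \<circ> (\<lambda>z. - z\<^sup>2)"
  have f_conformal: "conformal_map_onto f upper_half_plane \<Omega>"
    unfolding f_def using conformal_map_onto_neg_square assms(1) by (rule conformal_map_onto_compose)
  have f_infinity: "ang_tendsto_H f at_infinity"
    unfolding f_def o_def using assms(2) by (rule ang_tendsto_H_compose_neg_square)
  then have sqrt_f_infinity: "ang_tendsto_H (\<lambda>z. csqrt (f z)) at_infinity"
    unfolding ang_tendsto_H_def using filterlim_compose[OF filterlim_csqrt_at_infinity] by blast
  obtain d where d: "d\<^sup>2 = - c" "d \<noteq> 0"
    using assms(3) by (intro that[of "csqrt (- c)"]) auto
  define k where "k z = csqrt (f z) / (d * z)" for z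
  have k_continuous: "continuous_on upper_half_plane k"
  proof -
    have "continuous_on upper_half_plane f" "f ` upper_half_plane \<subseteq> - \<real>\<^sub>\<le>\<^sub>0"
      using f_conformal assms(5) holomorphic_on_imp_continuous_on
      by (auto simp: conformal_map_onto_def slit_plane_eq)
    then show ?thesis
      unfolding k_def using d(2)
      by (intro continuous_intros continuous_on_compose2[OF continuous_on_csqrt])
         (auto simp: upper_half_plane_def)
  qed
  have k_square: "ang_tendsto_H (\<lambda>z. (k z)\<^sup>2) (nhds 1)"
  proof -
    have "ang_tendsto_H (\<lambda>z. g (- z\<^sup>2) / (- z\<^sup>2) / c) (nhds (c / c))"
      using ang_tendsto_H_compose_neg_square[OF assms(4)]
      by (rule ang_tendsto_H_isCont_compose) (intro continuous_intros assms(3))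
    moreover have "(\<lambda>z. g (- z\<^sup>2) / (- z\<^sup>2) / c) = (\<lambda>z. (k z)\<^sup>2)"
      using d by (auto simp: k_def f_def power_divide power_mult_distrib)
    ultimately show ?thesis
      using assms(3) by simp
  qed
  obtain \<sigma> where \<sigma>: "\<sigma>\<^sup>2 = 1" "ang_tendsto_H k (nhds \<sigma>)"
    using ang_tendsto_H_root_of_one[OF k_continuous k_square] by blast
  have "ang_tendsto_H (\<lambda>z. d * k z) (nhds (d * \<sigma>))"
    using \<sigma>(2) by (rule ang_tendsto_H_isCont_compose) (intro continuous_intros)
  moreover have "(\<lambda>z. d * k z) = (\<lambda>z. csqrt (f z) / z)"
    using d(2) by (auto simp: k_def)
  moreover have "d * \<sigma> \<noteq> 0"
    using d(2) \<sigma>(1) by auto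
  ultimately show ?thesis
    using f_conformal f_infinity sqrt_f_infinity
    unfolding conformal_at_infinity_H_def by metis
qed

theorem lemma5p8:
  fixes \<Omega> :: "complex set"
  assumes "open \<Omega>" and "connected \<Omega>" and "simply_connected \<Omega>"
    and "\<Omega> \<subseteq> slit_plane"
  shows "(\<exists>f. conformal_map_onto f upper_half_plane \<Omega> \<and> ang_tendsto_H f at_infinity
             \<and> conformal_at_infinity_H (\<lambda>z. csqrt (f z)))
     \<longleftrightarrow> (\<exists>g. conformal_map_onto g slit_plane \<Omega> \<and> ang_tendsto_K g at_infinity
             \<and> (\<exists>c. c \<noteq> 0 \<and> ang_tendsto_K (\<lambda>w. g w / w) (nhds c)))"
  using slit_plane_map_if_half_plane_map half_plane_map_if_slit_plane_map[OF _ _ _ _ assms(4)]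
  by blast

end
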